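(* $\mathfrak{G}\left[ (\mathbb{X}, \dagger) \right]_X$ is a Markov category.
   Context: Let $(\mathbb{X}, \dagger)$ be a dagger additive category: a category with a dagger (an identity-on-objects, involutive, contravariant functor $f \mapsto f^\dagger$), enriched in abelian groups with $(f+g)^\dagger = f^\dagger + g^\dagger$, and having all finite biproducts whose projections and injections satisfy $\pi_j^\dagger = \iota_j$. Fix an object $X \in \mathbb{X}$. A map $p: B \to B$ is $\dagger$-positive if $p = \phi^\dagger \circ \phi$ for some map $\phi: B \to D$. The Gauss construction $\mathfrak{G}\left[ (\mathbb{X}, \dagger) \right]_X$ is the category whose objects are those of $\mathbb{X}$, whose maps $A \to B$ are triples $(f,p,x)$ with $f: A \to B$, $p: B \to B$ $\dagger$-positive, and $x: X \to B$; identities are $(\mathsf{id}_A, 0, 0)$ and composition is $(g,q,y) \circ (f,p,x) = (g \circ f, q + g \circ p \circ g^\dagger, y + g \circ x)$. It is symmetric monoidal with $A \otimes B = A \oplus B$, $(f,p,x) \otimes (g,q,y) = \left(f \oplus g, p \oplus q, \begin{bmatrix} x \\ y \end{bmatrix}\right)$, unit the zero object $\mathsf{0}$, and symmetry $\mathsf{swap}_{A,B} = \left(\begin{bmatrix} 0 & \mathsf{id}_B \\ \mathsf{id}_A & 0 \end{bmatrix}, 0, 0\right)$. The copy map is $\mathsf{copy}_A = \left(\begin{bmatrix} \mathsf{id}_A \\ \mathsf{id}_A \end{bmatrix}, 0, 0\right): A \to A \otimes A$ and the delete is $\mathsf{del}_A = (0,0,0): A \to \mathsf{0}$. A Markov category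 is a symmetric monoidal category in which each object carries a cocommutative comonoid $(\mathsf{copy}_A, \mathsf{del}_A)$, coherent with the monoidal structure ($\mathsf{copy}_{A\otimes B} = (\mathsf{id}_A \otimes \mathsf{swap}_{A,B} \otimes \mathsf{id}_B)\circ(\mathsf{copy}_A \otimes \mathsf{copy}_B)$, $\mathsf{del}_{A\otimes B} = \mathsf{del}_A \otimes \mathsf{del}_B$), and such that $\mathsf{del}$ is natural ($\mathsf{del}_B \circ f = \mathsf{del}_A$ for all $f: A \to B$). *)

theory Defs
  imports Main
begin

section \<open>Categories with hom-sets indexed by objects (objects = the type 'o)\<close>

text \<open>Every operation takes the relevant objects as explicit arguments, so no typing
information needs to be stored inside the morphisms.
cmp C A B D g f is the composite g o f of f in hom A B and g in hom B D.\<close>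

record ('o,'m) cat =
  hom :: "'o \<Rightarrow> 'o \<Rightarrow> 'm set"
  idm :: "'o \<Rightarrow> 'm"
  cmp :: "'o \<Rightarrow> 'o \<Rightarrow> 'o \<Rightarrow> 'm \<Rightarrow> 'm \<Rightarrow> 'm"

definition category :: "('o,'m,'e) cat_scheme \<Rightarrow> bool" where
  "category C \<longleftrightarrow>
     (\<forall>A. idm C A \<in> hom C A A) \<and>
     (\<forall>A B D f g. f \<in> hom C A B \<longrightarrow> g \<in> hom C B D \<longrightarrow> cmp C A B D g f \<in> hom C A D) \<and>
     (\<forall>A B f. f \<in> hom C A B \<longrightarrow> cmp C A B B (idm C B) f = f \<and> cmp C A A B f (idm C A) = f) \<and>
     (\<forall>A B D E f g h. f \<in> hom C A B \<longrightarrow> g \<in> hom C B D \<longrightarrow> h \<in> hom C D E \<longrightarrow>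
        cmp C A D E h (cmp C A B D g f) = cmp C A B E (cmp C B D E h g) f)"

definition iso :: "('o,'m,'e) cat_scheme \<Rightarrow> 'o \<Rightarrow> 'o \<Rightarrow> 'm \<Rightarrow> bool" where
  "iso C A B f \<longleftrightarrow> f \<in> hom C A B \<and>
     (\<exists>g \<in> hom C B A. cmp C A B A g f = idm C A \<and> cmp C B A B f g = idm C B)"

definition cinv :: "('o,'m,'e) cat_scheme \<Rightarrow> 'o \<Rightarrow> 'o \<Rightarrow> 'm \<Rightarrow> 'm" where
  "cinv C A B f = (SOME g. g \<in> hom C B A \<and> cmp C A B A g f = idm C A \<and> cmp C B A B f g = idm C B)"

section \<open>Dagger additive categories (with chosen binary biproducts and zero object)\<close>

record ('o,'m) dac = "('o,'m) cat" +
  dag :: "'o \<Rightarrow> 'o \<Rightarrow> 'm \<Rightarrow> 'm"     \<comment> \<open>dag C A B f : B -> A for f : A -> B\<close>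
  addm :: "'o \<Rightarrow> 'o \<Rightarrow> 'm \<Rightarrow> 'm \<Rightarrow> 'm"
  zro :: "'o \<Rightarrow> 'o \<Rightarrow> 'm"
  bp :: "'o \<Rightarrow> 'o \<Rightarrow> 'o"
  pr1 :: "'o \<Rightarrow> 'o \<Rightarrow> 'm"
  pr2 :: "'o \<Rightarrow> 'o \<Rightarrow> 'm"
  in1 :: "'o \<Rightarrow> 'o \<Rightarrow> 'm"
  in2 :: "'o \<Rightarrow> 'o \<Rightarrow> 'm"
  zob :: "'o"

definition dagger_additive :: "('o,'m,'e) dac_scheme \<Rightarrow> bool" where
  "dagger_additive C \<longleftrightarrow>
     category C \<and>
     \<comment> \<open>dagger: identity on objects, involutive, contravariant functor\<close>
     (\<forall>A B f. f \<in> hom C A B \<longrightarrow> dag C A B f \<in> hom C B A \<and> dag C B A (dag C A B f) = f) \<and>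
     (\<forall>A. dag C A A (idm C A) = idm C A) \<and>
     (\<forall>A B D f g. f \<in> hom C A B \<longrightarrow> g \<in> hom C B D \<longrightarrow>
        dag C A D (cmp C A B D g f) = cmp C D B A (dag C A B f) (dag C B D g)) \<and>
     \<comment> \<open>enrichment in abelian groups\<close>
     (\<forall>A B. zro C A B \<in> hom C A B) \<and>
     (\<forall>A B f g. f \<in> hom C A B \<longrightarrow> g \<in> hom C A B \<longrightarrow> addm C A B f g \<in> hom C A B) \<and>
     (\<forall>A B f g h. f \<in> hom C A B \<longrightarrow> g \<in> hom C A B \<longrightarrow> h \<in> hom C A B \<longrightarrow>
        addm C A B (addm C A B f g) h = addm C A B f (addm C A B g h)) \<and>
     (\<forall>A B f g. f \<in> hom C A B \<longrightarrow> g \<in> hom C A B \<longrightarrow> addm C A B f g = addm C A B g f) \<and>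
     (\<forall>A B f. f \<in> hom C A B \<longrightarrow> addm C A B f (zro C A B) = f) \<and>
     (\<forall>A B f. f \<in> hom C A B \<longrightarrow> (\<exists>g \<in> hom C A B. addm C A B f g = zro C A B)) \<and>
     (\<forall>A B D f g h. f \<in> hom C A B \<longrightarrow> g \<in> hom C A B \<longrightarrow> h \<in> hom C B D \<longrightarrow>
        cmp C A B D h (addm C A B f g) = addm C A D (cmp C A B D h f) (cmp C A B D h g)) \<and>
     (\<forall>A B D f g h. h \<in> hom C A B \<longrightarrow> f \<in> hom C B D \<longrightarrow> g \<in> hom C B D \<longrightarrow>
        cmp C A B D (addm C B D f g) h = addm C A D (cmp C A B D f h) (cmp C A B D g h)) \<and>
     \<comment> \<open>dagger is additive\<close>
     (\<forall>A B f g. f \<in> hom C A B \<longrightarrow> g \<in> hom C A B \<longrightarrow>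
        dag C A B (addm C A B f g) = addm C B A (dag C A B f) (dag C A B g)) \<and>
     \<comment> \<open>binary biproducts\<close>
     (\<forall>A B. pr1 C A B \<in> hom C (bp C A B) A \<and> pr2 C A B \<in> hom C (bp C A B) B \<and>
            in1 C A B \<in> hom C A (bp C A B) \<and> in2 C A B \<in> hom C B (bp C A B)) \<and>
     (\<forall>A B. cmp C A (bp C A B) A (pr1 C A B) (in1 C A B) = idm C A \<and>
            cmp C B (bp C A B) B (pr2 C A B) (in2 C A B) = idm C B \<and>
            cmp C B (bp C A B) A (pr1 C A B) (in2 C A B) = zro C B A \<and>
            cmp C A (bp C A B) B (pr2 C A B) (in1 C A B) = zro C A B \<and>
            addm C (bp C A B) (bp C A B)
              (cmp C (bp C A B) A (bp C A B) (in1 C A B) (pr1 C A B))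
              (cmp C (bp C A B) B (bp C A B) (in2 C A B) (pr2 C A B)) = idm C (bp C A B)) \<and>
     (\<forall>A B. dag C (bp C A B) A (pr1 C A B) = in1 C A B \<and> dag C (bp C A B) B (pr2 C A B) = in2 C A B) \<and>
     \<comment> \<open>zero object (nullary biproduct)\<close>
     idm C (zob C) = zro C (zob C) (zob C)"

section \<open>Symmetric monoidal and Markov categories\<close>

text \<open>tensm C A B A' B' f g : A \<otimes> A' -> B \<otimes> B' for f : A -> B, g : A' -> B'.
asc A B D : (A \<otimes> B) \<otimes> D -> A \<otimes> (B \<otimes> D); lun A : I \<otimes> A -> A; run A : A \<otimes> I -> A;
brd A B : A \<otimes> B -> B \<otimes> A.\<close>

record ('o,'m) smc = "('o,'m) cat" +
  tens :: "'o \<Rightarrow> 'o \<Rightarrow> 'o"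
  tensm :: "'o \<Rightarrow> 'o \<Rightarrow> 'o \<Rightarrow> 'o \<Rightarrow> 'm \<Rightarrow> 'm \<Rightarrow> 'm"
  munit :: "'o"
  asc :: "'o \<Rightarrow> 'o \<Rightarrow> 'o \<Rightarrow> 'm"
  lun :: "'o \<Rightarrow> 'm"
  run :: "'o \<Rightarrow> 'm"
  brd :: "'o \<Rightarrow> 'o \<Rightarrow> 'm"

record ('o,'m) markov = "('o,'m) smc" +
  cpy :: "'o \<Rightarrow> 'm"
  del :: "'o \<Rightarrow> 'm"

definition sym_monoidal :: "('o,'m,'e) smc_scheme \<Rightarrow> bool" where
  "sym_monoidal C \<longleftrightarrow>
     category C \<and>
     \<comment> \<open>tensor is a bifunctor\<close>
     (\<forall>A B A' B' f g. f \<in> hom C A B \<longrightarrow> g \<in> hom C A' B' \<longrightarrow>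
        tensm C A B A' B' f g \<in> hom C (tens C A A') (tens C B B')) \<and>
     (\<forall>A A'. tensm C A A A' A' (idm C A) (idm C A') = idm C (tens C A A')) \<and>
     (\<forall>A B D A' B' D' f g f' g'. f \<in> hom C A B \<longrightarrow> g \<in> hom C B D \<longrightarrow>
        f' \<in> hom C A' B' \<longrightarrow> g' \<in> hom C B' D' \<longrightarrow>
        cmp C (tens C A A') (tens C B B') (tens C D D') (tensm C B D B' D' g g') (tensm C A B A' B' f f')
        = tensm C A D A' D' (cmp C A B D g f) (cmp C A' B' D' g' f')) \<and>
     \<comment> \<open>structure maps are isomorphisms\<close>
     (\<forall>A B D. iso C (tens C (tens C A B) D) (tens C A (tens C B D)) (asc C A B D)) \<and>
     (\<forall>A. iso C (tens C (munit C) A) A (lun C A)) \<and>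
     (\<forall>A. iso C (tens C A (munit C)) A (run C A)) \<and>
     (\<forall>A B. iso C (tens C A B) (tens C B A) (brd C A B)) \<and>
     \<comment> \<open>naturality\<close>
     (\<forall>A A' B B' D D' f g h. f \<in> hom C A A' \<longrightarrow> g \<in> hom C B B' \<longrightarrow> h \<in> hom C D D' \<longrightarrow>
        cmp C (tens C (tens C A B) D) (tens C (tens C A' B') D') (tens C A' (tens C B' D'))
          (asc C A' B' D') (tensm C (tens C A B) (tens C A' B') D D' (tensm C A A' B B' f g) h)
        = cmp C (tens C (tens C A B) D) (tens C A (tens C B D)) (tens C A' (tens C B' D'))
          (tensm C A A' (tens C B D) (tens C B' D') f (tensm C B B' D D' g h)) (asc C A B D)) \<and>
     (\<forall>A B f. f \<in> hom C A B \<longrightarrow>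
        cmp C (tens C (munit C) A) (tens C (munit C) B) B (lun C B)
          (tensm C (munit C) (munit C) A B (idm C (munit C)) f)
        = cmp C (tens C (munit C) A) A B f (lun C A)) \<and>
     (\<forall>A B f. f \<in> hom C A B \<longrightarrow>
        cmp C (tens C A (munit C)) (tens C B (munit C)) B (run C B)
          (tensm C A B (munit C) (munit C) f (idm C (munit C)))
        = cmp C (tens C A (munit C)) A B f (run C A)) \<and>
     (\<forall>A A' B B' f g. f \<in> hom C A A' \<longrightarrow> g \<in> hom C B B' \<longrightarrow>
        cmp C (tens C A B) (tens C A' B') (tens C B' A') (brd C A' B') (tensm C A A' B B' f g)
        = cmp C (tens C A B) (tens C B A) (tens C B' A') (tensm C B B' A A' g f) (brd C A B)) \<and>
     \<comment> \<open>pentagon\<close>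
     (\<forall>A B D E.
        cmp C (tens C (tens C (tens C A B) D) E) (tens C (tens C A B) (tens C D E))
              (tens C A (tens C B (tens C D E)))
          (asc C A B (tens C D E)) (asc C (tens C A B) D E)
        = cmp C (tens C (tens C (tens C A B) D) E) (tens C A (tens C (tens C B D) E))
              (tens C A (tens C B (tens C D E)))
          (tensm C A A (tens C (tens C B D) E) (tens C B (tens C D E)) (idm C A) (asc C B D E))
          (cmp C (tens C (tens C (tens C A B) D) E) (tens C (tens C A (tens C B D)) E)
                 (tens C A (tens C (tens C B D) E))
             (asc C A (tens C B D) E)
             (tensm C (tens C (tens C A B) D) (tens C A (tens C B D)) E E (asc C A B D) (idm C E)))) \<and>
     \<comment> \<open>triangle\<close>
     (\<forall>A B.
        cmp C (tens C (tens C A (munit C)) B) (tens C A (tens C (munit C) B)) (tens C A B)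
          (tensm C A A (tens C (munit C) B) B (idm C A) (lun C B)) (asc C A (munit C) B)
        = tensm C (tens C A (munit C)) A B B (run C A) (idm C B)) \<and>
     \<comment> \<open>hexagon\<close>
     (\<forall>A B D.
        cmp C (tens C (tens C A B) D) (tens C (tens C B D) A) (tens C B (tens C D A))
          (asc C B D A)
          (cmp C (tens C (tens C A B) D) (tens C A (tens C B D)) (tens C (tens C B D) A)
             (brd C A (tens C B D)) (asc C A B D))
        = cmp C (tens C (tens C A B) D) (tens C B (tens C A D)) (tens C B (tens C D A))
          (tensm C B B (tens C A D) (tens C D A) (idm C B) (brd C A D))
          (cmp C (tens C (tens C A B) D) (tens C (tens C B A) D) (tens C B (tens C A D))
             (asc C B A D)
             (tensm C (tens C A B) (tens C B A) D D (brd C A B) (idm C D)))) \<and>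
     \<comment> \<open>symmetry\<close>
     (\<forall>A B. cmp C (tens C A B) (tens C B A) (tens C A B) (brd C B A) (brd C A B) = idm C (tens C A B))"

text \<open>The middle-four interchange (A \<otimes> A) \<otimes> (B \<otimes> B) -> (A \<otimes> B) \<otimes> (A \<otimes> B), i.e. the
map written id \<otimes> swap \<otimes> id in strictified notation, with the associators made explicit.\<close>
definition mid4 :: "('o,'m,'e) smc_scheme \<Rightarrow> 'o \<Rightarrow> 'o \<Rightarrow> 'm" where
  "mid4 C A B =
     (let T = tens C;
          O0 = T (T A A) (T B B); O1 = T A (T A (T B B)); O2 = T A (T (T A B) B);
          O3 = T A (T (T B A) B); O4 = T A (T B (T A B)); O5 = T (T A B) (T A B);
          s1 = asc C A A (T B B);
          s2 = tensm C A A (T A (T B B)) (T (T A B) B) (idm C A) (cinv C (T (T A B) B) (T A (T B B)) (asc C A B B));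
          s3 = tensm C A A (T (T A B) B) (T (T B A) B) (idm C A) (tensm C (T A B) (T B A) B B (brd C A B) (idm C B));
          s4 = tensm C A A (T (T B A) B) (T B (T A B)) (idm C A) (asc C B A B);
          s5 = cinv C O5 O4 (asc C A B (T A B))
      in cmp C O0 O4 O5 s5 (cmp C O0 O3 O4 s4 (cmp C O0 O2 O3 s3 (cmp C O0 O1 O2 s2 s1))))"

definition markov_category :: "('o,'m,'e) markov_scheme \<Rightarrow> bool" where
  "markov_category C \<longleftrightarrow>
     sym_monoidal C \<and>
     (\<forall>A. cpy C A \<in> hom C A (tens C A A) \<and> del C A \<in> hom C A (munit C)) \<and>
     \<comment> \<open>counit laws\<close>
     (\<forall>A. cmp C A (tens C (munit C) A) A (lun C A)
            (cmp C A (tens C A A) (tens C (munit C) A) (tensm C A (munit C) A A (del C A) (idm C A)) (cpy C A))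
          = idm C A) \<and>
     (\<forall>A. cmp C A (tens C A (munit C)) A (run C A)
            (cmp C A (tens C A A) (tens C A (munit C)) (tensm C A A A (munit C) (idm C A) (del C A)) (cpy C A))
          = idm C A) \<and>
     \<comment> \<open>coassociativity\<close>
     (\<forall>A. cmp C A (tens C (tens C A A) A) (tens C A (tens C A A)) (asc C A A A)
            (cmp C A (tens C A A) (tens C (tens C A A) A) (tensm C A (tens C A A) A A (cpy C A) (idm C A)) (cpy C A))
          = cmp C A (tens C A A) (tens C A (tens C A A)) (tensm C A A A (tens C A A) (idm C A) (cpy C A)) (cpy C A)) \<and>
     \<comment> \<open>cocommutativity\<close>
     (\<forall>A. cmp C A (tens C A A) (tens C A A) (brd C A A) (cpy C A) = cpy C A) \<and>
     \<comment> \<open>compatibility with the monoidal structure\<close>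
     (\<forall>A B. cpy C (tens C A B)
          = cmp C (tens C A B) (tens C (tens C A A) (tens C B B)) (tens C (tens C A B) (tens C A B))
              (mid4 C A B) (tensm C A (tens C A A) B (tens C B B) (cpy C A) (cpy C B))) \<and>
     (\<forall>A B. del C (tens C A B)
          = cmp C (tens C A B) (tens C (munit C) (munit C)) (munit C)
              (lun C (munit C)) (tensm C A (munit C) B (munit C) (del C A) (del C B))) \<and>
     \<comment> \<open>naturality of delete\<close>
     (\<forall>A B f. f \<in> hom C A B \<longrightarrow> cmp C A B (munit C) (del C B) f = del C A)"

section \<open>The Gauss construction\<close>

definition dpositive :: "('o,'m,'e) dac_scheme \<Rightarrow> 'o \<Rightarrow> 'm \<Rightarrow> bool" where
  "dpositive C B p \<longleftrightarrow> p \<in> hom C B B \<and>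
     (\<exists>D \<phi>. \<phi> \<in> hom C B D \<and> p = cmp C B D B (dag C B D \<phi>) \<phi>)"

definition bpmap :: "('o,'m,'e) dac_scheme \<Rightarrow> 'o \<Rightarrow> 'o \<Rightarrow> 'o \<Rightarrow> 'o \<Rightarrow> 'm \<Rightarrow> 'm \<Rightarrow> 'm" where
  "bpmap C A B A' B' f g =
     addm C (bp C A A') (bp C B B')
       (cmp C (bp C A A') B (bp C B B') (in1 C B B') (cmp C (bp C A A') A B f (pr1 C A A')))
       (cmp C (bp C A A') B' (bp C B B') (in2 C B B') (cmp C (bp C A A') A' B' g (pr2 C A A')))"

definition colpair :: "('o,'m,'e) dac_scheme \<Rightarrow> 'o \<Rightarrow> 'o \<Rightarrow> 'o \<Rightarrow> 'm \<Rightarrow> 'm \<Rightarrow> 'm" where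
  "colpair C X A B x y =
     addm C X (bp C A B) (cmp C X A (bp C A B) (in1 C A B) x) (cmp C X B (bp C A B) (in2 C A B) y)"

definition swapX :: "('o,'m,'e) dac_scheme \<Rightarrow> 'o \<Rightarrow> 'o \<Rightarrow> 'm" where
  "swapX C A B =
     addm C (bp C A B) (bp C B A)
       (cmp C (bp C A B) B (bp C B A) (in1 C B A) (pr2 C A B))
       (cmp C (bp C A B) A (bp C B A) (in2 C B A) (pr1 C A B))"

definition copyX :: "('o,'m,'e) dac_scheme \<Rightarrow> 'o \<Rightarrow> 'm" where
  "copyX C A = addm C A (bp C A A) (in1 C A A) (in2 C A A)"

definition assocX :: "('o,'m,'e) dac_scheme \<Rightarrow> 'o \<Rightarrow> 'o \<Rightarrow> 'o \<Rightarrow> 'm" where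
  "assocX C A B D =
     (let P = bp C (bp C A B) D; Q = bp C B D; R = bp C A Q in
      addm C P R
        (cmp C P A R (in1 C A Q) (cmp C P (bp C A B) A (pr1 C A B) (pr1 C (bp C A B) D)))
        (cmp C P Q R (in2 C A Q)
           (addm C P Q
              (cmp C P B Q (in1 C B D) (cmp C P (bp C A B) B (pr2 C A B) (pr1 C (bp C A B) D)))
              (cmp C P D Q (in2 C B D) (pr2 C (bp C A B) D)))))"

definition gauss_hom :: "('o,'m,'e) dac_scheme \<Rightarrow> 'o \<Rightarrow> 'o \<Rightarrow> 'o \<Rightarrow> ('m \<times> 'm \<times> 'm) set" where
  "gauss_hom C X A B = {(f, p, x). f \<in> hom C A B \<and> dpositive C B p \<and> x \<in> hom C X B}"

definition gauss_cmp :: "('o,'m,'e) dac_scheme \<Rightarrow> 'o \<Rightarrow> 'o \<Rightarrow> 'o \<Rightarrow> 'o \<Rightarrow>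
    'm \<times> 'm \<times> 'm \<Rightarrow> 'm \<times> 'm \<times> 'm \<Rightarrow> 'm \<times> 'm \<times> 'm" where
  "gauss_cmp C X A B D m n =
     (case m of (g, q, y) \<Rightarrow> case n of (f, p, x) \<Rightarrow>
        (cmp C A B D g f,
         addm C D D q (cmp C D B D (cmp C B B D g p) (dag C B D g)),
         addm C X D y (cmp C X B D g x)))"

definition gauss_tensm :: "('o,'m,'e) dac_scheme \<Rightarrow> 'o \<Rightarrow> 'o \<Rightarrow> 'o \<Rightarrow> 'o \<Rightarrow> 'o \<Rightarrow>
    'm \<times> 'm \<times> 'm \<Rightarrow> 'm \<times> 'm \<times> 'm \<Rightarrow> 'm \<times> 'm \<times> 'm" where
  "gauss_tensm C X A B A' B' m n =
     (case m of (f, p, x) \<Rightarrow> case n of (g, q, y) \<Rightarrow>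
        (bpmap C A B A' B' f g, bpmap C B B B' B' p q, colpair C X B B' x y))"

definition glift :: "('o,'m,'e) dac_scheme \<Rightarrow> 'o \<Rightarrow> 'o \<Rightarrow> 'm \<Rightarrow> 'm \<times> 'm \<times> 'm" where
  "glift C X B f = (f, zro C B B, zro C X B)"

definition gauss :: "('o,'m,'e) dac_scheme \<Rightarrow> 'o \<Rightarrow> ('o, 'm \<times> 'm \<times> 'm) markov" where
  "gauss C X =
     \<lparr> hom = gauss_hom C X,
       idm = (\<lambda>A. glift C X A (idm C A)),
       cmp = gauss_cmp C X,
       tens = bp C,
       tensm = gauss_tensm C X,
       munit = zob C,
       asc = (\<lambda>A B D. glift C X (bp C A (bp C B D)) (assocX C A B D)),
       lun = (\<lambda>A. glift C X A (pr2 C (zob C) A)),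
       run = (\<lambda>A. glift C X A (pr1 C A (zob C))),
       brd = (\<lambda>A B. glift C X (bp C B A) (swapX C A B)),
       cpy = (\<lambda>A. glift C X (bp C A A) (copyX C A)),
       del = (\<lambda>A. glift C X (zob C) (zro C A (zob C))) \<rparr>"

end

(* All structure maps of the Gauss construction (associator, unitors, symmetry, copy,
   delete) have the form (f, 0, 0) for the corresponding canonical biproduct map f of the
   underlying category, and such maps compose and tensor componentwise. Hence the coherence and comonoid laws reduce to identities
   between biproduct matrices in X, checked entrywise. The naturality squares also involve the
   positive and the X-components; they hold because the canonical maps u are natural and
   unitary (u u\<dagger> = 1), so conjugating p \<oplus> q by u just rearranges the summands.
   Deletion is natural because the unit is a zero object, so (0, 0, 0) is the only map into it.
   Positive maps are closed under sums, direct sums and conjugation g p g\<dagger>, which makes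
   composition and tensor well defined. *)

theory Submission
  imports Defs
begin

lemma cinv_eqI:
  assumes "category D" "f \<in> hom D A B" "g \<in> hom D B A"
    and "cmp D A B A g f = idm D A" "cmp D B A B f g = idm D B"
  shows "cinv D A B f = g"
proof -
  let ?inverse = "\<lambda>g. g \<in> hom D B A \<and> cmp D A B A g f = idm D A \<and> cmp D B A B f g = idm D B"
  have "?inverse (cinv D A B f)"
    unfolding cinv_def by (rule someI[of ?inverse g]) (use assms in simp)
  then have h: "cinv D A B f \<in> hom D B A" "cmp D A B A (cinv D A B f) f = idm D A"
    by auto
  have "cinv D A B f = cmp D B B A (cinv D A B f) (cmp D B A B f g)"
    using assms h unfolding category_def by simp
  also have "\<dots> = cmp D B A A (cmp D A B A (cinv D A B f) f) g"
    using assms h unfolding category_def by metis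
  also have "\<dots> = g"
    using assms h unfolding category_def by simp
  finally show ?thesis .
qed

text \<open>An equation between maps Z -> Y with the objects recorded. They carry no logical content,
  but let the extensionality rules for biproducts be applied by intro, which splits an equation
  between maps of iterated biproducts into equations between their matrix entries.\<close>
definition hom_eq :: "'o \<Rightarrow> 'o \<Rightarrow> 'm \<Rightarrow> 'm \<Rightarrow> bool" where
  "hom_eq Z Y f g \<longleftrightarrow> f = g"

definition unassocX :: "('o,'m,'e) dac_scheme \<Rightarrow> 'o \<Rightarrow> 'o \<Rightarrow> 'o \<Rightarrow> 'm" where
  "unassocX C A B D =
     (let P = bp C (bp C A B) D; Q = bp C B D; R = bp C A Q in
      addm C R P
        (cmp C R (bp C A B) P (in1 C (bp C A B) D)
           (addm C R (bp C A B)
              (cmp C R A (bp C A B) (in1 C A B) (pr1 C A Q))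
              (cmp C R B (bp C A B) (in2 C A B) (cmp C R Q B (pr1 C B D) (pr2 C A Q)))))
        (cmp C R D P (in2 C (bp C A B) D) (cmp C R Q D (pr2 C B D) (pr2 C A Q))))"

locale dagger_additive_cat =
  fixes C :: "('o,'m,'e) dac_scheme"
  assumes dagger_additive: "dagger_additive C"
begin

lemmas axioms = dagger_additive[unfolded dagger_additive_def category_def]

lemma idm_in_hom[simp]: "idm C A \<in> hom C A A"
  using axioms by metis
lemma cmp_in_hom[simp]: "f \<in> hom C A B \<Longrightarrow> g \<in> hom C B D \<Longrightarrow> cmp C A B D g f \<in> hom C A D"
  using axioms by metis
lemma cmp_idm_left[simp]: "f \<in> hom C A B \<Longrightarrow> cmp C A B B (idm C B) f = f"
  using axioms by metis
lemma cmp_idm_right[simp]: "f \<in> hom C A B \<Longrightarrow> cmp C A A B f (idm C A) = f"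
  using axioms by metis
lemma cmp_assoc: "f \<in> hom C A B \<Longrightarrow> g \<in> hom C B D \<Longrightarrow> h \<in> hom C D E \<Longrightarrow>
    cmp C A D E h (cmp C A B D g f) = cmp C A B E (cmp C B D E h g) f"
  using axioms by metis
text \<open>Composites are simplified to right-nested form; lemmas such as pr1_in1_cmp below are
  the versions of the biproduct equations that match this normal form.\<close>
lemmas cmp_assoc_right[simp] = cmp_assoc[symmetric]

lemma dag_in_hom[simp]: "f \<in> hom C A B \<Longrightarrow> dag C A B f \<in> hom C B A"
  using axioms by metis
lemma dag_dag[simp]: "f \<in> hom C A B \<Longrightarrow> dag C B A (dag C A B f) = f"
  using axioms by metis
lemma dag_idm[simp]: "dag C A A (idm C A) = idm C A"
  using axioms by metis
lemma dag_cmp[simp]: "f \<in> hom C A B \<Longrightarrow> g \<in> hom C B D \<Longrightarrow>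
    dag C A D (cmp C A B D g f) = cmp C D B A (dag C A B f) (dag C B D g)"
  using axioms by metis
lemma zro_in_hom[simp]: "zro C A B \<in> hom C A B"
  using axioms by metis
lemma addm_in_hom[simp]: "f \<in> hom C A B \<Longrightarrow> g \<in> hom C A B \<Longrightarrow> addm C A B f g \<in> hom C A B"
  using axioms by metis
lemma addm_assoc[simp]: "f \<in> hom C A B \<Longrightarrow> g \<in> hom C A B \<Longrightarrow> h \<in> hom C A B \<Longrightarrow>
    addm C A B (addm C A B f g) h = addm C A B f (addm C A B g h)"
  using axioms by metis
lemma addm_commute: "f \<in> hom C A B \<Longrightarrow> g \<in> hom C A B \<Longrightarrow> addm C A B f g = addm C A B g f"
  using axioms by metis
lemma addm_zro_right[simp]: "f \<in> hom C A B \<Longrightarrow> addm C A B f (zro C A B) = f"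
  using axioms by metis
lemma addm_zro_left[simp]: "f \<in> hom C A B \<Longrightarrow> addm C A B (zro C A B) f = f"
  using addm_commute addm_zro_right zro_in_hom by metis
lemma addm_inverse_ex: "f \<in> hom C A B \<Longrightarrow> \<exists>g \<in> hom C A B. addm C A B f g = zro C A B"
  using axioms by metis
lemma cmp_addm_right[simp]: "f \<in> hom C A B \<Longrightarrow> g \<in> hom C A B \<Longrightarrow> h \<in> hom C B D \<Longrightarrow>
    cmp C A B D h (addm C A B f g) = addm C A D (cmp C A B D h f) (cmp C A B D h g)"
  using axioms by metis
lemma cmp_addm_left[simp]: "h \<in> hom C A B \<Longrightarrow> f \<in> hom C B D \<Longrightarrow> g \<in> hom C B D \<Longrightarrow>
    cmp C A B D (addm C B D f g) h = addm C A D (cmp C A B D f h) (cmp C A B D g h)"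
  using axioms by metis
lemma dag_addm[simp]: "f \<in> hom C A B \<Longrightarrow> g \<in> hom C A B \<Longrightarrow>
    dag C A B (addm C A B f g) = addm C B A (dag C A B f) (dag C A B g)"
  using axioms by metis
lemma pr1_in_hom[simp]: "pr1 C A B \<in> hom C (bp C A B) A"
  using axioms by metis
lemma pr2_in_hom[simp]: "pr2 C A B \<in> hom C (bp C A B) B"
  using axioms by metis
lemma in1_in_hom[simp]: "in1 C A B \<in> hom C A (bp C A B)"
  using axioms by metis
lemma in2_in_hom[simp]: "in2 C A B \<in> hom C B (bp C A B)"
  using axioms by metis
lemma pr1_in1[simp]: "cmp C A (bp C A B) A (pr1 C A B) (in1 C A B) = idm C A"
  using axioms by metis
lemma pr2_in2[simp]: "cmp C B (bp C A B) B (pr2 C A B) (in2 C A B) = idm C B"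
  using axioms by metis
lemma pr1_in2[simp]: "cmp C B (bp C A B) A (pr1 C A B) (in2 C A B) = zro C B A"
  using axioms by metis
lemma pr2_in1[simp]: "cmp C A (bp C A B) B (pr2 C A B) (in1 C A B) = zro C A B"
  using axioms by metis
lemma in_pr_sum: "addm C (bp C A B) (bp C A B)
    (cmp C (bp C A B) A (bp C A B) (in1 C A B) (pr1 C A B))
    (cmp C (bp C A B) B (bp C A B) (in2 C A B) (pr2 C A B)) = idm C (bp C A B)"
  using axioms by metis
lemma dag_pr1[simp]: "dag C (bp C A B) A (pr1 C A B) = in1 C A B"
  using axioms by metis
lemma dag_pr2[simp]: "dag C (bp C A B) B (pr2 C A B) = in2 C A B"
  using axioms by metis
lemma dag_in1[simp]: "dag C A (bp C A B) (in1 C A B) = pr1 C A B"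
  using dag_pr1 dag_dag pr1_in_hom by metis
lemma dag_in2[simp]: "dag C B (bp C A B) (in2 C A B) = pr2 C A B"
  using dag_pr2 dag_dag pr2_in_hom by metis
lemma idm_zob: "idm C (zob C) = zro C (zob C) (zob C)"
  using axioms by metis

lemma addm_idem_imp_zro:
  assumes "f \<in> hom C A B" "addm C A B f f = f"
  shows "f = zro C A B"
proof -
  obtain g where g: "g \<in> hom C A B" "addm C A B f g = zro C A B"
    using addm_inverse_ex assms(1) by blast
  have "f = addm C A B f (addm C A B f g)" using assms(1) g by simp
  also have "\<dots> = addm C A B (addm C A B f f) g" using assms(1) g by simp
  also have "\<dots> = zro C A B" using assms g by simp
  finally show ?thesis .
qed

lemma cmp_zro_right[simp]: "h \<in> hom C B D \<Longrightarrow> cmp C A B D h (zro C A B) = zro C A D"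
  by (rule addm_idem_imp_zro) (simp, metis addm_zro_right cmp_addm_right zro_in_hom)
lemma cmp_zro_left[simp]: "f \<in> hom C A B \<Longrightarrow> cmp C A B D (zro C B D) f = zro C A D"
  by (rule addm_idem_imp_zro) (simp, metis addm_zro_right cmp_addm_left zro_in_hom)
lemma dag_zro[simp]: "dag C A B (zro C A B) = zro C B A"
  by (rule addm_idem_imp_zro) (simp, metis addm_zro_right dag_addm zro_in_hom)

lemma pr1_in1_cmp[simp]:
  "k \<in> hom C Z A \<Longrightarrow> cmp C Z (bp C A B) A (pr1 C A B) (cmp C Z A (bp C A B) (in1 C A B) k) = k"
  by (subst cmp_assoc) simp_all
lemma pr2_in2_cmp[simp]:
  "k \<in> hom C Z B \<Longrightarrow> cmp C Z (bp C A B) B (pr2 C A B) (cmp C Z B (bp C A B) (in2 C A B) k) = k"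
  by (subst cmp_assoc) simp_all
lemma pr1_in2_cmp[simp]:
  "k \<in> hom C Z B \<Longrightarrow> cmp C Z (bp C A B) A (pr1 C A B) (cmp C Z B (bp C A B) (in2 C A B) k) = zro C Z A"
  by (subst cmp_assoc) simp_all
lemma pr2_in1_cmp[simp]:
  "k \<in> hom C Z A \<Longrightarrow> cmp C Z (bp C A B) B (pr2 C A B) (cmp C Z A (bp C A B) (in1 C A B) k) = zro C Z B"
  by (subst cmp_assoc) simp_all

lemma hom_bp_cod_decompose:
  assumes f: "f \<in> hom C Z (bp C A B)"
  shows "f = addm C Z (bp C A B)
               (cmp C Z A (bp C A B) (in1 C A B) (cmp C Z (bp C A B) A (pr1 C A B) f))
               (cmp C Z B (bp C A B) (in2 C A B) (cmp C Z (bp C A B) B (pr2 C A B) f))"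
proof -
  have "f = cmp C Z (bp C A B) (bp C A B) (idm C (bp C A B)) f" using f by simp
  then show ?thesis using f by (simp flip: in_pr_sum)
qed

lemma hom_bp_dom_decompose:
  assumes f: "f \<in> hom C (bp C A B) Y"
  shows "f = addm C (bp C A B) Y
               (cmp C (bp C A B) A Y (cmp C A (bp C A B) Y f (in1 C A B)) (pr1 C A B))
               (cmp C (bp C A B) B Y (cmp C B (bp C A B) Y f (in2 C A B)) (pr2 C A B))"
proof -
  have "f = cmp C (bp C A B) (bp C A B) Y f (idm C (bp C A B))" using f by simp
  then show ?thesis using f by (simp flip: in_pr_sum)
qed

lemma hom_zob_dom_eq_zro: "f \<in> hom C (zob C) A \<Longrightarrow> f = zro C (zob C) A"
  by (metis cmp_idm_right cmp_zro_right idm_zob)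

lemma hom_eq_bp_codI:
  "f \<in> hom C Z (bp C A B) \<Longrightarrow> g \<in> hom C Z (bp C A B) \<Longrightarrow>
   hom_eq Z A (cmp C Z (bp C A B) A (pr1 C A B) f) (cmp C Z (bp C A B) A (pr1 C A B) g) \<Longrightarrow>
   hom_eq Z B (cmp C Z (bp C A B) B (pr2 C A B) f) (cmp C Z (bp C A B) B (pr2 C A B) g) \<Longrightarrow>
   hom_eq Z (bp C A B) f g"
  unfolding hom_eq_def by (metis hom_bp_cod_decompose)
lemma hom_eq_bp_domI:
  "f \<in> hom C (bp C A B) Y \<Longrightarrow> g \<in> hom C (bp C A B) Y \<Longrightarrow>
   hom_eq A Y (cmp C A (bp C A B) Y f (in1 C A B)) (cmp C A (bp C A B) Y g (in1 C A B)) \<Longrightarrow>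
   hom_eq B Y (cmp C B (bp C A B) Y f (in2 C A B)) (cmp C B (bp C A B) Y g (in2 C A B)) \<Longrightarrow>
   hom_eq (bp C A B) Y f g"
  unfolding hom_eq_def by (metis hom_bp_dom_decompose)
lemma hom_eq_zob_domI: "f \<in> hom C (zob C) Y \<Longrightarrow> g \<in> hom C (zob C) Y \<Longrightarrow> hom_eq (zob C) Y f g"
  unfolding hom_eq_def by (metis hom_zob_dom_eq_zro)

lemma cmp_eq_hom_eqI: "hom_eq A D (cmp C A B D g f) h \<Longrightarrow> cmp C A B D g f = h"
  unfolding hom_eq_def .
lemma addm_eq_hom_eqI: "hom_eq A B (addm C A B f g) h \<Longrightarrow> addm C A B f g = h"
  unfolding hom_eq_def .
lemma bpmap_eq_hom_eqI:
  "hom_eq (bp C A A') (bp C B B') (bpmap C A B A' B' f g) h \<Longrightarrow> bpmap C A B A' B' f g = h"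
  unfolding hom_eq_def .
lemma colpair_eq_hom_eqI: "hom_eq X (bp C A B) (colpair C X A B f g) h \<Longrightarrow> colpair C X A B f g = h"
  unfolding hom_eq_def .

lemma hom_eqD: "hom_eq Z Y f g \<Longrightarrow> f = g"
  unfolding hom_eq_def .

lemmas eq_hom_eqI =
  cmp_eq_hom_eqI addm_eq_hom_eqI bpmap_eq_hom_eqI colpair_eq_hom_eqI

lemmas hom_eqI = hom_eq_bp_codI hom_eq_bp_domI hom_eq_zob_domI

lemma bpmap_in_hom[simp]:
  "f \<in> hom C A B \<Longrightarrow> g \<in> hom C A' B' \<Longrightarrow> bpmap C A B A' B' f g \<in> hom C (bp C A A') (bp C B B')"
  unfolding bpmap_def by simp
lemma colpair_in_hom[simp]:
  "x \<in> hom C X A \<Longrightarrow> y \<in> hom C X B \<Longrightarrow> colpair C X A B x y \<in> hom C X (bp C A B)"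
  unfolding colpair_def by simp
lemma swapX_in_hom[simp]: "swapX C A B \<in> hom C (bp C A B) (bp C B A)"
  unfolding swapX_def by simp
lemma copyX_in_hom[simp]: "copyX C A \<in> hom C A (bp C A A)"
  unfolding copyX_def by simp
lemma assocX_in_hom[simp]: "assocX C A B D \<in> hom C (bp C (bp C A B) D) (bp C A (bp C B D))"
  unfolding assocX_def Let_def by simp
lemma unassocX_in_hom[simp]: "unassocX C A B D \<in> hom C (bp C A (bp C B D)) (bp C (bp C A B) D)"
  unfolding unassocX_def Let_def by simp

lemmas matrix_defs = bpmap_def colpair_def swapX_def copyX_def assocX_def unassocX_def Let_def

lemma bpmap_idm[simp]: "bpmap C A A A' A' (idm C A) (idm C A') = idm C (bp C A A')"
  unfolding bpmap_def by (simp add: in_pr_sum)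
lemma bpmap_zro[simp]: "bpmap C A B A' B' (zro C A B) (zro C A' B') = zro C (bp C A A') (bp C B B')"
  unfolding bpmap_def by simp
lemma colpair_zro[simp]: "colpair C X A B (zro C X A) (zro C X B) = zro C X (bp C A B)"
  unfolding colpair_def by simp

lemma pr1_bpmap[simp]:
  "f \<in> hom C A B \<Longrightarrow> g \<in> hom C A' B' \<Longrightarrow>
   cmp C (bp C A A') (bp C B B') B (pr1 C B B') (bpmap C A B A' B' f g) = cmp C (bp C A A') A B f (pr1 C A A')"
  unfolding bpmap_def by simp
lemma pr2_bpmap[simp]:
  "f \<in> hom C A B \<Longrightarrow> g \<in> hom C A' B' \<Longrightarrow>
   cmp C (bp C A A') (bp C B B') B' (pr2 C B B') (bpmap C A B A' B' f g) = cmp C (bp C A A') A' B' g (pr2 C A A')"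
  unfolding bpmap_def by simp
lemma bpmap_in2[simp]:
  "f \<in> hom C A B \<Longrightarrow> g \<in> hom C A' B' \<Longrightarrow>
   cmp C A' (bp C A A') (bp C B B') (bpmap C A B A' B' f g) (in2 C A A') = cmp C A' B' (bp C B B') (in2 C B B') g"
  unfolding bpmap_def by simp
lemma pr1_colpair[simp]:
  "x \<in> hom C X A \<Longrightarrow> y \<in> hom C X B \<Longrightarrow> cmp C X (bp C A B) A (pr1 C A B) (colpair C X A B x y) = x"
  unfolding colpair_def by simp
lemma pr2_colpair[simp]:
  "x \<in> hom C X A \<Longrightarrow> y \<in> hom C X B \<Longrightarrow> cmp C X (bp C A B) B (pr2 C A B) (colpair C X A B x y) = y"
  unfolding colpair_def by simp

lemma bpmap_cmp[simp]:
  "f \<in> hom C A B \<Longrightarrow> g \<in> hom C B D \<Longrightarrow> f' \<in> hom C A' B' \<Longrightarrow> g' \<in> hom C B' D' \<Longrightarrow>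
   cmp C (bp C A A') (bp C B B') (bp C D D') (bpmap C B D B' D' g g') (bpmap C A B A' B' f f')
   = bpmap C A D A' D' (cmp C A B D g f) (cmp C A' B' D' g' f')"
  by (intro eq_hom_eqI hom_eqI; simp add: matrix_defs hom_eq_def)
lemma bpmap_colpair[simp]:
  "x \<in> hom C X A \<Longrightarrow> y \<in> hom C X A' \<Longrightarrow> f \<in> hom C A B \<Longrightarrow> g \<in> hom C A' B' \<Longrightarrow>
   cmp C X (bp C A A') (bp C B B') (bpmap C A B A' B' f g) (colpair C X A A' x y)
   = colpair C X B B' (cmp C X A B f x) (cmp C X A' B' g y)"
  by (intro eq_hom_eqI hom_eqI; simp add: matrix_defs hom_eq_def)
lemma bpmap_addm[simp]:
  "f \<in> hom C A B \<Longrightarrow> f' \<in> hom C A B \<Longrightarrow> g \<in> hom C A' B' \<Longrightarrow> g' \<in> hom C A' B' \<Longrightarrow>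
   addm C (bp C A A') (bp C B B') (bpmap C A B A' B' f g) (bpmap C A B A' B' f' g')
   = bpmap C A B A' B' (addm C A B f f') (addm C A' B' g g')"
  by (intro eq_hom_eqI hom_eqI; simp add: hom_eq_def)
lemma colpair_addm[simp]:
  "x \<in> hom C X A \<Longrightarrow> x' \<in> hom C X A \<Longrightarrow> y \<in> hom C X B \<Longrightarrow> y' \<in> hom C X B \<Longrightarrow>
   addm C X (bp C A B) (colpair C X A B x y) (colpair C X A B x' y')
   = colpair C X A B (addm C X A x x') (addm C X B y y')"
  by (intro eq_hom_eqI hom_eqI; simp add: hom_eq_def)
lemma dag_bpmap[simp]:
  "f \<in> hom C A B \<Longrightarrow> g \<in> hom C A' B' \<Longrightarrow>
   dag C (bp C A A') (bp C B B') (bpmap C A B A' B' f g) = bpmap C B A B' A' (dag C A B f) (dag C A' B' g)"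
  unfolding bpmap_def by simp

lemma assocX_natural:
  "f \<in> hom C A A' \<Longrightarrow> g \<in> hom C B B' \<Longrightarrow> h \<in> hom C D D' \<Longrightarrow>
   cmp C (bp C (bp C A B) D) (bp C (bp C A' B') D') (bp C A' (bp C B' D'))
     (assocX C A' B' D') (bpmap C (bp C A B) (bp C A' B') D D' (bpmap C A A' B B' f g) h)
   = cmp C (bp C (bp C A B) D) (bp C A (bp C B D)) (bp C A' (bp C B' D'))
     (bpmap C A A' (bp C B D) (bp C B' D') f (bpmap C B B' D D' g h)) (assocX C A B D)"
  by (intro eq_hom_eqI hom_eqI; simp add: matrix_defs hom_eq_def)
lemma assocX_colpair:
  "x \<in> hom C X A \<Longrightarrow> y \<in> hom C X B \<Longrightarrow> z \<in> hom C X D \<Longrightarrow>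
   cmp C X (bp C (bp C A B) D) (bp C A (bp C B D)) (assocX C A B D) (colpair C X (bp C A B) D (colpair C X A B x y) z)
   = colpair C X A (bp C B D) x (colpair C X B D y z)"
  by (intro eq_hom_eqI hom_eqI; simp add: matrix_defs hom_eq_def)
lemma dag_assocX: "dag C (bp C (bp C A B) D) (bp C A (bp C B D)) (assocX C A B D) = unassocX C A B D"
  by (intro hom_eqD[of "bp C A (bp C B D)" "bp C (bp C A B) D"] hom_eqI; simp add: matrix_defs hom_eq_def)
lemma unassocX_assocX:
  "cmp C (bp C (bp C A B) D) (bp C A (bp C B D)) (bp C (bp C A B) D) (unassocX C A B D) (assocX C A B D)
   = idm C (bp C (bp C A B) D)"
  by (intro eq_hom_eqI hom_eqI; simp add: matrix_defs hom_eq_def)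
lemma assocX_unassocX:
  "cmp C (bp C A (bp C B D)) (bp C (bp C A B) D) (bp C A (bp C B D)) (assocX C A B D) (unassocX C A B D)
   = idm C (bp C A (bp C B D))"
  by (intro eq_hom_eqI hom_eqI; simp add: matrix_defs hom_eq_def)
lemma assocX_unitary:
  "cmp C (bp C A (bp C B D)) (bp C (bp C A B) D) (bp C A (bp C B D))
     (assocX C A B D) (dag C (bp C (bp C A B) D) (bp C A (bp C B D)) (assocX C A B D))
   = idm C (bp C A (bp C B D))"
  by (simp add: dag_assocX assocX_unassocX)

lemma swapX_natural:
  "f \<in> hom C A A' \<Longrightarrow> g \<in> hom C B B' \<Longrightarrow>
   cmp C (bp C A B) (bp C A' B') (bp C B' A') (swapX C A' B') (bpmap C A A' B B' f g)
   = cmp C (bp C A B) (bp C B A) (bp C B' A') (bpmap C B B' A A' g f) (swapX C A B)"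
  by (intro eq_hom_eqI hom_eqI; simp add: matrix_defs hom_eq_def)
lemma swapX_colpair:
  "x \<in> hom C X A \<Longrightarrow> y \<in> hom C X B \<Longrightarrow>
   cmp C X (bp C A B) (bp C B A) (swapX C A B) (colpair C X A B x y) = colpair C X B A y x"
  by (intro eq_hom_eqI hom_eqI; simp add: matrix_defs hom_eq_def)
lemma dag_swapX: "dag C (bp C A B) (bp C B A) (swapX C A B) = swapX C B A"
  unfolding swapX_def by (simp add: addm_commute)
lemma swapX_swapX: "cmp C (bp C A B) (bp C B A) (bp C A B) (swapX C B A) (swapX C A B) = idm C (bp C A B)"
  by (intro eq_hom_eqI hom_eqI; simp add: matrix_defs hom_eq_def)
lemma swapX_unitary:
  "cmp C (bp C B A) (bp C A B) (bp C B A) (swapX C A B) (dag C (bp C A B) (bp C B A) (swapX C A B)) = idm C (bp C B A)"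
  by (simp add: dag_swapX swapX_swapX)

lemma assocX_pentagon:
  "cmp C (bp C (bp C (bp C A B) D) E) (bp C (bp C A B) (bp C D E)) (bp C A (bp C B (bp C D E)))
     (assocX C A B (bp C D E)) (assocX C (bp C A B) D E)
   = cmp C (bp C (bp C (bp C A B) D) E) (bp C A (bp C (bp C B D) E)) (bp C A (bp C B (bp C D E)))
     (bpmap C A A (bp C (bp C B D) E) (bp C B (bp C D E)) (idm C A) (assocX C B D E))
     (cmp C (bp C (bp C (bp C A B) D) E) (bp C (bp C A (bp C B D)) E) (bp C A (bp C (bp C B D) E))
       (assocX C A (bp C B D) E)
       (bpmap C (bp C (bp C A B) D) (bp C A (bp C B D)) E E (assocX C A B D) (idm C E)))"
  by (intro eq_hom_eqI hom_eq_bp_domI; simp add: matrix_defs hom_eq_def)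
lemma assocX_triangle:
  "cmp C (bp C (bp C A (zob C)) B) (bp C A (bp C (zob C) B)) (bp C A B)
     (bpmap C A A (bp C (zob C) B) B (idm C A) (pr2 C (zob C) B)) (assocX C A (zob C) B)
   = bpmap C (bp C A (zob C)) A B B (pr1 C A (zob C)) (idm C B)"
  by (intro eq_hom_eqI hom_eqI; simp add: matrix_defs hom_eq_def)
lemma swapX_hexagon:
  "cmp C (bp C (bp C A B) D) (bp C (bp C B D) A) (bp C B (bp C D A))
     (assocX C B D A) (cmp C (bp C (bp C A B) D) (bp C A (bp C B D)) (bp C (bp C B D) A)
       (swapX C A (bp C B D)) (assocX C A B D))
   = cmp C (bp C (bp C A B) D) (bp C B (bp C A D)) (bp C B (bp C D A))
     (bpmap C B B (bp C A D) (bp C D A) (idm C B) (swapX C A D))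
     (cmp C (bp C (bp C A B) D) (bp C (bp C B A) D) (bp C B (bp C A D))
       (assocX C B A D) (bpmap C (bp C A B) (bp C B A) D D (swapX C A B) (idm C D)))"
  by (intro eq_hom_eqI hom_eq_bp_domI; simp add: matrix_defs hom_eq_def)

lemma copyX_counit_left:
  "cmp C A (bp C (zob C) A) A (pr2 C (zob C) A)
     (cmp C A (bp C A A) (bp C (zob C) A) (bpmap C A (zob C) A A (zro C A (zob C)) (idm C A)) (copyX C A))
   = idm C A"
  by (intro eq_hom_eqI; simp add: matrix_defs hom_eq_def)
lemma copyX_counit_right:
  "cmp C A (bp C A (zob C)) A (pr1 C A (zob C))
     (cmp C A (bp C A A) (bp C A (zob C)) (bpmap C A A A (zob C) (idm C A) (zro C A (zob C))) (copyX C A))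
   = idm C A"
  by (intro eq_hom_eqI; simp add: matrix_defs hom_eq_def)
lemma copyX_coassoc:
  "cmp C A (bp C (bp C A A) A) (bp C A (bp C A A)) (assocX C A A A)
     (cmp C A (bp C A A) (bp C (bp C A A) A) (bpmap C A (bp C A A) A A (copyX C A) (idm C A)) (copyX C A))
   = cmp C A (bp C A A) (bp C A (bp C A A)) (bpmap C A A A (bp C A A) (idm C A) (copyX C A)) (copyX C A)"
  by (intro eq_hom_eqI hom_eqI; simp add: matrix_defs hom_eq_def)
lemma copyX_cocommutative: "cmp C A (bp C A A) (bp C A A) (swapX C A A) (copyX C A) = copyX C A"
  by (intro eq_hom_eqI hom_eqI; simp add: matrix_defs hom_eq_def)
lemma copyX_bp:
  "copyX C (bp C A B) =
   cmp C (bp C A B) (bp C A (bp C B (bp C A B))) (bp C (bp C A B) (bp C A B)) (unassocX C A B (bp C A B))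
    (cmp C (bp C A B) (bp C A (bp C (bp C B A) B)) (bp C A (bp C B (bp C A B)))
      (bpmap C A A (bp C (bp C B A) B) (bp C B (bp C A B)) (idm C A) (assocX C B A B))
      (cmp C (bp C A B) (bp C A (bp C (bp C A B) B)) (bp C A (bp C (bp C B A) B))
        (bpmap C A A (bp C (bp C A B) B) (bp C (bp C B A) B) (idm C A)
          (bpmap C (bp C A B) (bp C B A) B B (swapX C A B) (idm C B)))
        (cmp C (bp C A B) (bp C A (bp C A (bp C B B))) (bp C A (bp C (bp C A B) B))
          (bpmap C A A (bp C A (bp C B B)) (bp C (bp C A B) B) (idm C A) (unassocX C A B B))
          (cmp C (bp C A B) (bp C (bp C A A) (bp C B B)) (bp C A (bp C A (bp C B B)))
            (assocX C A A (bp C B B)) (bpmap C A (bp C A A) B (bp C B B) (copyX C A) (copyX C B))))))"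
  by (intro hom_eqD[of "bp C A B" "bp C (bp C A B) (bp C A B)"] hom_eq_bp_domI; simp add: matrix_defs hom_eq_def)

lemma in1_pr1_zob:
  "cmp C (bp C A (zob C)) A (bp C A (zob C)) (in1 C A (zob C)) (pr1 C A (zob C)) = idm C (bp C A (zob C))"
  by (intro eq_hom_eqI hom_eqI; simp add: hom_eq_def)
lemma in2_pr2_zob:
  "cmp C (bp C (zob C) A) A (bp C (zob C) A) (in2 C (zob C) A) (pr2 C (zob C) A) = idm C (bp C (zob C) A)"
  by (intro eq_hom_eqI hom_eqI; simp add: hom_eq_def)

lemma dpositiveI: "\<phi> \<in> hom C B D \<Longrightarrow> p = cmp C B D B (dag C B D \<phi>) \<phi> \<Longrightarrow> dpositive C B p"
  unfolding dpositive_def by auto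

lemma dpositiveE:
  assumes "dpositive C B p"
  obtains D \<phi> where "\<phi> \<in> hom C B D" "p = cmp C B D B (dag C B D \<phi>) \<phi>"
  using assms unfolding dpositive_def by blast

lemma dpositive_in_hom[simp]: "dpositive C B p \<Longrightarrow> p \<in> hom C B B"
  unfolding dpositive_def by blast

lemma dpositive_zro[simp]: "dpositive C B (zro C B B)"
  by (rule dpositiveI[where D = "zob C" and \<phi> = "zro C B (zob C)"]) simp_all

lemma dpositive_addm[simp]:
  assumes "dpositive C B p" "dpositive C B q"
  shows "dpositive C B (addm C B B p q)"
proof -
  obtain D1 \<phi> where \<phi>: "\<phi> \<in> hom C B D1" "p = cmp C B D1 B (dag C B D1 \<phi>) \<phi>"
    using assms(1) by (rule dpositiveE)
  obtain D2 \<psi> where \<psi>: "\<psi> \<in> hom C B D2" "q = cmp C B D2 B (dag C B D2 \<psi>) \<psi>"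
    using assms(2) by (rule dpositiveE)
  show ?thesis
    by (rule dpositiveI[where D = "bp C D1 D2" and \<phi> = "colpair C B D1 D2 \<phi> \<psi>"]) (simp_all add: \<phi> \<psi> colpair_def)
qed

lemma dpositive_conj[simp]:
  assumes "dpositive C B p" "g \<in> hom C B D"
  shows "dpositive C D (cmp C D B D g (cmp C D B B p (dag C B D g)))"
proof -
  obtain E \<phi> where \<phi>: "\<phi> \<in> hom C B E" "p = cmp C B E B (dag C B E \<phi>) \<phi>"
    using assms(1) by (rule dpositiveE)
  show ?thesis
    by (rule dpositiveI[where D = E and \<phi> = "cmp C D B E \<phi> (dag C B D g)"]) (simp_all add: \<phi> assms)
qed

lemma dpositive_bpmap[simp]:
  assumes "dpositive C B p" "dpositive C B' q"
  shows "dpositive C (bp C B B') (bpmap C B B B' B' p q)"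
proof -
  obtain D1 \<phi> where \<phi>: "\<phi> \<in> hom C B D1" "p = cmp C B D1 B (dag C B D1 \<phi>) \<phi>"
    using assms(1) by (rule dpositiveE)
  obtain D2 \<psi> where \<psi>: "\<psi> \<in> hom C B' D2" "q = cmp C B' D2 B' (dag C B' D2 \<psi>) \<psi>"
    using assms(2) by (rule dpositiveE)
  show ?thesis
  proof (rule dpositiveI[where D = "bp C D1 D2" and \<phi> = "bpmap C B D1 B' D2 \<phi> \<psi>"])
    show "bpmap C B B B' B' p q = cmp C (bp C B B') (bp C D1 D2) (bp C B B')
      (dag C (bp C B B') (bp C D1 D2) (bpmap C B D1 B' D2 \<phi> \<psi>)) (bpmap C B D1 B' D2 \<phi> \<psi>)"
      by (rule bpmap_eq_hom_eqI, intro hom_eqI; simp add: \<phi> \<psi> matrix_defs hom_eq_def)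
  qed (simp add: \<phi> \<psi>)
qed

lemma gauss_simps[simp]:
  "hom (gauss C X) = gauss_hom C X"
  "idm (gauss C X) = (\<lambda>A. glift C X A (idm C A))"
  "cmp (gauss C X) = gauss_cmp C X"
  "tens (gauss C X) = bp C"
  "tensm (gauss C X) = gauss_tensm C X"
  "munit (gauss C X) = zob C"
  "asc (gauss C X) = (\<lambda>A B D. glift C X (bp C A (bp C B D)) (assocX C A B D))"
  "lun (gauss C X) = (\<lambda>A. glift C X A (pr2 C (zob C) A))"
  "run (gauss C X) = (\<lambda>A. glift C X A (pr1 C A (zob C)))"
  "brd (gauss C X) = (\<lambda>A B. glift C X (bp C B A) (swapX C A B))"
  "cpy (gauss C X) = (\<lambda>A. glift C X (bp C A A) (copyX C A))"
  "del (gauss C X) = (\<lambda>A. glift C X (zob C) (zro C A (zob C)))"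
  by (simp_all add: gauss_def)

lemma gauss_hom_iff[simp]:
  "(f, p, x) \<in> gauss_hom C X A B \<longleftrightarrow> f \<in> hom C A B \<and> dpositive C B p \<and> x \<in> hom C X B"
  unfolding gauss_hom_def by simp

lemma gauss_cmp_simp[simp]:
  "gauss_cmp C X A B D (g, q, y) (f, p, x) =
    (cmp C A B D g f,
     addm C D D q (cmp C D B D (cmp C B B D g p) (dag C B D g)),
     addm C X D y (cmp C X B D g x))"
  unfolding gauss_cmp_def by simp

lemma gauss_tensm_simp[simp]:
  "gauss_tensm C X A B A' B' (f, p, x) (g, q, y) =
    (bpmap C A B A' B' f g, bpmap C B B B' B' p q, colpair C X B B' x y)"
  unfolding gauss_tensm_def by simp

lemma gauss_category: "category (gauss C X)"
  unfolding category_def by (simp add: split_paired_All glift_def)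

lemma iso_gauss_glift:
  assumes "f \<in> hom C A B" "g \<in> hom C B A" "cmp C A B A g f = idm C A" "cmp C B A B f g = idm C B"
  shows "iso (gauss C X) A B (glift C X B f)"
  unfolding iso_def using assms
  by (simp add: glift_def, intro bexI[of _ "glift C X A g"]) (simp_all add: glift_def)

lemma gauss_structure_isos:
  "iso (gauss C X) (bp C (bp C A B) D) (bp C A (bp C B D)) (glift C X (bp C A (bp C B D)) (assocX C A B D))"
  "iso (gauss C X) (bp C (zob C) A) A (glift C X A (pr2 C (zob C) A))"
  "iso (gauss C X) (bp C A (zob C)) A (glift C X A (pr1 C A (zob C)))"
  "iso (gauss C X) (bp C A B) (bp C B A) (glift C X (bp C B A) (swapX C A B))"
  by (rule iso_gauss_glift[where g = "unassocX C A B D"], simp_all add: unassocX_assocX assocX_unassocX)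
     (rule iso_gauss_glift[where g = "in2 C (zob C) A"], simp_all add: in2_pr2_zob,
      rule iso_gauss_glift[where g = "in1 C A (zob C)"], simp_all add: in1_pr1_zob,
      rule iso_gauss_glift[where g = "swapX C B A"], simp_all add: swapX_swapX)

lemma gauss_sym_monoidal: "sym_monoidal (gauss C X)"
  unfolding sym_monoidal_def
  by (simp add: split_paired_All gauss_category gauss_structure_isos[unfolded glift_def] glift_def
    assocX_natural assocX_unitary assocX_colpair swapX_natural swapX_unitary swapX_colpair
    assocX_pentagon assocX_triangle swapX_hexagon swapX_swapX)

lemma gauss_cinv_assoc:
  "cinv (gauss C X) (bp C (bp C A B) D) (bp C A (bp C B D)) (glift C X (bp C A (bp C B D)) (assocX C A B D))
   = glift C X (bp C (bp C A B) D) (unassocX C A B D)"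
  by (rule cinv_eqI[OF gauss_category]) (simp_all add: glift_def unassocX_assocX assocX_unassocX)

lemma gauss_markov_category: "markov_category (gauss C X)"
  unfolding markov_category_def
  by (simp add: gauss_sym_monoidal split_paired_All mid4_def Let_def gauss_cinv_assoc[unfolded glift_def] glift_def
    copyX_counit_left copyX_counit_right copyX_coassoc copyX_cocommutative copyX_bp)

end

theorem mainTheorem1:
  fixes C :: "('o, 'm, 'e) dac_scheme" and X :: 'o
  assumes "dagger_additive C"
  shows "markov_category (gauss C X)"
proof -
  interpret dagger_additive_cat C by (rule dagger_additive_cat.intro) (rule assms)
  show ?thesis by (rule gauss_markov_category)
qed

end
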